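(* Let $K=[-q\mathbf 1,q\mathbf 1]$, $\sigma\in\Sigma$, and let $G$ be the event that there exist $x\in K$ and $y\in\mathbb R^d$ with $y<x$, $-\infty<\sigma(y)\le\sigma(x)-1<\infty$, and $\mathbf H((y,0),(x,t))\ge\sigma(x)+1-\sigma(y)$. Then for $0<t<1/(2e^{d+1}\psi_K(\sigma))$, $$P^\sigma(G)\le 2e^{2(d+1)}\psi_K^2(\sigma)\,t^2.$$
   Context: Order conventions: for $x,y\in\mathbb R^d$, $x\le y$ iff $x_i\le y_i$ for all $i$, $x<y$ iff $x_i<y_i$ for all $i$; $\mathbf 1=(1,\dots,1)$; $|x|_\infty=\max_i|x_i|$; $x!=x_1x_2\cdots x_d$; $[a,b]=\{x:a\le x\le b\}$. Fix $d\ge2$. $\mathbb Z^*=\mathbb Z\cup\{\pm\infty\}$. The state space $\Sigma$ is the set of functions $\sigma:\mathbb R^d\to\mathbb Z^*$ such that (i) $x\le y$ implies $\sigma(x)\le\sigma(y)$; (ii) for every cube $[-q\mathbf 1,q\mathbf 1]$ there are finite partitions $-q=s_i^0<\dots<s_i^{m_i}=q$ of each coordinate axis such that $\sigma$ is constant on each rectangle $\prod_i[s_i^{k_i},s_i^{k_i+1})$; (iii) for every $b\in\mathbb R^d$, $\lim_{M\to\infty}\sup\{|y|_\infty^{-d/(d+1)}\sigma(y):y\le b,|y|_\infty\ge M\}=-\infty$. A rate-one Poisson point process on $\mathbb R^d\times(0,\infty)$ is given, with law $P^\sigma$ (the process started from $\sigma$); for $y\le x$, $t>0$, $\mathbf H((y,0),(x,t))$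 is the maximal number of Poisson points on a strictly increasing chain (coordinatewise order in $\mathbb R^{d+1}$) in $\{(\eta,s):y<\eta\le x,0<s\le t\}$. For $b\in\mathbb R^d$, $h\in\mathbb Z$, $y^{b,h}(\sigma)$ is the maximal point $y\le b$ such that $[y,b]$ contains $\{x\le b:\sigma(x)\ge h\}$ ($=b$ if this set is empty). With $y^h=y^{q\mathbf 1,h}(\sigma)$, $\lambda_k(\sigma)=\sup_{-\infty<h\le k-2}(q\mathbf 1-y^h)!\,(k-h)^{-(d+1)}$. $I(K,\sigma)$ and $J(K,\sigma)$ are the minimal and maximal finite values of $\sigma$ on $K$ ($I=\infty=-J$ if there are none), and $\psi_K(\sigma)=\big(\sum_{k=I(K,\sigma)+1}^{J(K,\sigma)+1}\lambda_k^2(\sigma)\big)^{1/2}$. *)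

theory Defs
  imports "HOL-Analysis.Analysis" "HOL-Probability.Probability"
begin

text \<open>The library order on real^'n is the coordinatewise
  order x \<le> y iff all x$i \<le> y$i (this is used as is). The paper's strict
  order x < y means x$i < y$i for ALL i; we name it vlt.\<close>

definition vlt :: "real^'n \<Rightarrow> real^'n \<Rightarrow> bool" where
  "vlt x y \<longleftrightarrow> (\<forall>i. x$i < y$i)"

definition linf :: "real^'n \<Rightarrow> real" where
  "linf x = (MAX i. \<bar>x$i\<bar>)"

definition vfact :: "real^'n \<Rightarrow> real" where
  "vfact x = (\<Prod>i\<in>UNIV. x$i)"

definition ones :: "real^'n" where
  "ones = (\<chi> i. 1)"

definition cube :: "real \<Rightarrow> (real^'n) set" where
  "cube q = {x. - (q *\<^sub>R ones) \<le> x \<and> x \<le> q *\<^sub>R ones}"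

text \<open>States: Z* = Z \<union> {+-\<infinity>} is modelled inside ereal.\<close>

definition StateSpace :: "(real^'n \<Rightarrow> ereal) set" where
  "StateSpace = {\<sigma>.
     (\<forall>x. \<sigma> x \<in> {\<infinity>, -\<infinity>} \<union> range (\<lambda>n::int. ereal (of_int n))) \<and>
     (\<forall>x y. x \<le> y \<longrightarrow> \<sigma> x \<le> \<sigma> y) \<and>
     (\<forall>q>0. \<exists>S :: 'n \<Rightarrow> real set.
        (\<forall>i. finite (S i) \<and> -q \<in> S i \<and> q \<in> S i \<and> S i \<subseteq> {-q..q}) \<and>
        (\<forall>x y. (\<forall>i. -q \<le> x$i \<and> x$i < q \<and> -q \<le> y$i \<and> y$i < q) \<longrightarrow>
               (\<forall>i. \<forall>s\<in>S i. s \<le> x$i \<longleftrightarrow> s \<le> y$i) \<longrightarrow> \<sigma> x = \<sigma> y)) \<and>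
     (\<forall>b. ((\<lambda>M. SUP y\<in>{y. y \<le> b \<and> linf y \<ge> M}.
              ereal (linf y powr (- real CARD('n) / (real CARD('n) + 1))) * \<sigma> y)
           \<longlongrightarrow> -\<infinity>) at_top)}"

definition ybh :: "real^'n \<Rightarrow> int \<Rightarrow> (real^'n \<Rightarrow> ereal) \<Rightarrow> real^'n" where
  "ybh b h \<sigma> =
     (let S = {x. x \<le> b \<and> \<sigma> x \<ge> ereal (of_int h)} in
      if S = {} then b
      else (GREATEST y. y \<le> b \<and> (\<forall>x\<in>S. y \<le> x \<and> x \<le> b)))"

definition lam :: "real \<Rightarrow> int \<Rightarrow> (real^'n \<Rightarrow> ereal) \<Rightarrow> real" where
  "lam q k \<sigma> = (SUP h\<in>{h::int. h \<le> k - 2}.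
      vfact (q *\<^sub>R ones - ybh (q *\<^sub>R ones) h \<sigma>) * (real_of_int (k - h)) powr (- (real CARD('n) + 1)))"

text \<open>Finite values of \<sigma> on K; I = min, J = max; \<psi>_K = 0 if there are none
  (empty sum, matching I = \<infinity> = -J).\<close>

definition finvals :: "real \<Rightarrow> (real^'n \<Rightarrow> ereal) \<Rightarrow> int set" where
  "finvals q \<sigma> = {n. \<exists>x\<in>cube q. \<sigma> x = ereal (of_int n)}"

definition psiK :: "real \<Rightarrow> (real^'n \<Rightarrow> ereal) \<Rightarrow> real" where
  "psiK q \<sigma> = (if finvals q \<sigma> = {} then 0
     else sqrt (\<Sum>k\<in>{Min (finvals q \<sigma>) + 1 .. Max (finvals q \<sigma>) + 1}. (lam q k \<sigma>)\<^sup>2))"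

definition slt :: "(real^'n) \<times> real \<Rightarrow> (real^'n) \<times> real \<Rightarrow> bool" where
  "slt a b \<longleftrightarrow> vlt (fst a) (fst b) \<and> snd a < snd b"

definition Hlp :: "((real^'n) \<times> real) set \<Rightarrow> real^'n \<Rightarrow> real^'n \<Rightarrow> real \<Rightarrow> enat" where
  "Hlp P y x t = Sup {enat (card C) | C. finite C \<and>
      C \<subseteq> P \<inter> {(\<eta>, s). vlt y \<eta> \<and> \<eta> \<le> x \<and> 0 < s \<and> s \<le> t} \<and>
      (\<forall>a\<in>C. \<forall>b\<in>C. a \<noteq> b \<longrightarrow> slt a b \<or> slt b a)}"

text \<open>A rate-one Poisson point process on R^d \<times> (0,\<infinity>), realised on a probability
  space M by the random (locally finite) point set Pts.\<close>

definition poisson_pp :: "'w measure \<Rightarrow> ('w \<Rightarrow> ((real^'n) \<times> real) set) \<Rightarrow> bool" where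
  "poisson_pp M Pts \<longleftrightarrow> prob_space M \<and>
     (\<forall>\<omega>\<in>space M. Pts \<omega> \<subseteq> {p. 0 < snd p}) \<and>
     (\<forall>A. A \<in> sets borel \<and> bounded A \<longrightarrow>
        (\<forall>\<omega>\<in>space M. finite (Pts \<omega> \<inter> A)) \<and>
        (\<lambda>\<omega>. card (Pts \<omega> \<inter> A)) \<in> measurable M (count_space UNIV)) \<and>
     (\<forall>A (k::nat). A \<in> sets borel \<and> bounded A \<and> A \<subseteq> {p. 0 < snd p} \<longrightarrow>
        measure M {\<omega>\<in>space M. card (Pts \<omega> \<inter> A) = k}
          = exp (- measure lborel A) * measure lborel A ^ k / fact k) \<and>
     (\<forall>(F :: nat \<Rightarrow> ((real^'n) \<times> real) set) n.
        (\<forall>i<n. F i \<in> sets borel \<and> bounded (F i)) \<and> disjoint_family_on F {..<n} \<longrightarrow>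
        prob_space.indep_vars M (\<lambda>_. count_space UNIV) (\<lambda>i \<omega>. card (Pts \<omega> \<inter> F i)) {..<n})"

definition eventG :: "real \<Rightarrow> (real^'n \<Rightarrow> ereal) \<Rightarrow> real \<Rightarrow> ((real^'n) \<times> real) set \<Rightarrow> bool" where
  "eventG q \<sigma> t P \<longleftrightarrow> (\<exists>x\<in>cube q. \<exists>y. vlt y x \<and>
     (\<exists>a b :: int. \<sigma> y = ereal (of_int a) \<and> \<sigma> x = ereal (of_int b) \<and> a \<le> b - 1 \<and>
        Hlp P y x t \<ge> enat (nat (b + 1 - a))))"

end

(*
  If G occurs with sigma(x) = k - 1 and sigma(y) = h <= k - 2, then y^h <= y, so H >= k - h yields
  an increasing chain of n = k - h Poisson points in the box (y^h, q1] x (0, t], of volume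
  V = (q1 - y^h)! t.  Cut the box into N^(d+1) congruent cells: for N large the points of such a
  chain occupy a chain of cells, there are at most (N choose n)^(d+1) chains of cells, and by
  independence each is fully occupied with probability at most (V / N^(d+1))^n.  Hence the chain
  occurs with probability at most V^n / (n!)^(d+1), which by n! >= (n/e)^n and the definition of
  lambda_k is at most (e^(d+1) lambda_k t)^n.  Summing the geometric series over h <= k - 2 bounds
  level k by 2 (e^(d+1) lambda_k t)^2, and summing over k = I + 1, ..., J + 1 gives the bound.
  The argument works for every d >= 1.
*)

theory Submission
  imports Defs
begin

section \<open>Chains of integer points\<close>

definition coord_less :: "('j \<Rightarrow> 'a::order) \<Rightarrow> ('j \<Rightarrow> 'a) \<Rightarrow> bool" where
  "coord_less c c' \<longleftrightarrow> (\<forall>j. c j < c' j)"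

definition coord_chain :: "('j \<Rightarrow> 'a::order) set \<Rightarrow> bool" where
  "coord_chain T \<longleftrightarrow> pairwise (\<lambda>c c'. coord_less c c' \<or> coord_less c' c) T"

lemma inj_on_rank:
  fixes P :: "'a::linorder set"
  assumes "finite P"
  shows "inj_on (\<lambda>u. card {w\<in>P. w < u}) P"
proof (rule linorder_inj_onI')
  fix u v assume "u \<in> P" "v \<in> P" "u < v"
  then have "{w\<in>P. w < u} \<subset> {w\<in>P. w < v}" by auto
  then show "card {w\<in>P. w < u} \<noteq> card {w\<in>P. w < v}"
    using psubset_card_mono[of "{w\<in>P. w < v}" "{w\<in>P. w < u}"] assms by auto
qed

lemma inj_on_proj_coord_chain:
  assumes "coord_chain T"
  shows "inj_on (\<lambda>c. c j) T"
proof (rule inj_onI, rule ccontr)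
  fix c c' assume "c \<in> T" "c' \<in> T" "c j = c' j" "c \<noteq> c'"
  then show False
    using assms unfolding coord_chain_def pairwise_def coord_less_def
    by (metis less_irrefl)
qed

text \<open>In a chain every coordinate projection is strictly monotone, so the rank of
  an element within its chain can be read off from any single coordinate.\<close>

lemma rank_proj_coord_chain:
  fixes T :: "('j \<Rightarrow> 'a::linorder) set"
  assumes "coord_chain T" "c \<in> T"
  shows "card {v \<in> (\<lambda>c. c j) ` T. v < c j} = card {c'\<in>T. coord_less c' c}"
proof -
  have "{v \<in> (\<lambda>c. c j) ` T. v < c j} = (\<lambda>c. c j) ` {c'\<in>T. c' j < c j}"
    by blast
  also have "card \<dots> = card {c'\<in>T. c' j < c j}"
    by (rule card_image, rule inj_on_subset[OF inj_on_proj_coord_chain[OF assms(1)]]) auto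
  also have "{c'\<in>T. c' j < c j} = {c'\<in>T. coord_less c' c}"
  proof -
    have "coord_less c' c \<longleftrightarrow> c' j < c j" if c': "c' \<in> T" for c'
    proof
      assume lt: "c' j < c j"
      then have "c' \<noteq> c" by auto
      then have "coord_less c' c \<or> coord_less c c'"
        using assms c' unfolding coord_chain_def pairwise_def by blast
      moreover have "\<not> coord_less c c'"
        using lt unfolding coord_less_def by (meson order.asym)
      ultimately show "coord_less c' c" by blast
    qed (simp add: coord_less_def)
    then show ?thesis by blast
  qed
  finally show ?thesis .
qed

lemma coord_chain_subset_if_proj_eq:
  fixes T T' :: "('j \<Rightarrow> 'a::linorder) set"
  assumes ch: "coord_chain T" "coord_chain T'" and fin: "finite T"
    and proj: "\<And>j. (\<lambda>c. c j) ` T = (\<lambda>c. c j) ` T'"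
  shows "T \<subseteq> T'"
proof
  fix c assume c: "c \<in> T"
  have "c undefined \<in> (\<lambda>c. c undefined) ` T'"
    unfolding proj[symmetric] using c by (rule imageI)
  then obtain c' where c': "c' \<in> T'" "c' undefined = c undefined"
    by (rule imageE) simp
  have rank: "card {d\<in>T'. coord_less d c'} = card {d\<in>T. coord_less d c}"
  proof -
    have "card {d\<in>T'. coord_less d c'} = card {v \<in> (\<lambda>c. c undefined) ` T'. v < c' undefined}"
      by (rule rank_proj_coord_chain[OF ch(2) c'(1), symmetric])
    also have "\<dots> = card {v \<in> (\<lambda>c. c undefined) ` T. v < c undefined}"
      by (simp only: proj c'(2))
    also have "\<dots> = card {d\<in>T. coord_less d c}"
      by (rule rank_proj_coord_chain[OF ch(1) c])
    finally show ?thesis .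
  qed
  have "c' j = c j" for j
  proof (rule inj_onD[OF inj_on_rank[OF finite_imageI[OF fin]]])
    have "card {w \<in> (\<lambda>c. c j) ` T. w < c' j} = card {d\<in>T'. coord_less d c'}"
      unfolding proj by (rule rank_proj_coord_chain[OF ch(2) c'(1)])
    also have "\<dots> = card {w \<in> (\<lambda>c. c j) ` T. w < c j}"
      unfolding rank by (rule rank_proj_coord_chain[OF ch(1) c, symmetric])
    finally show "card {w \<in> (\<lambda>c. c j) ` T. w < c' j} = card {w \<in> (\<lambda>c. c j) ` T. w < c j}" .
    show "c' j \<in> (\<lambda>c. c j) ` T"
      unfolding proj using c'(1) by (rule imageI)
  qed (rule imageI[OF c])
  then have "c' = c" by (rule ext)
  then show "c \<in> T'" using c'(1) by simp
qed

definition grid_chains :: "nat \<Rightarrow> nat \<Rightarrow> ('j::finite \<Rightarrow> int) set set" where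
  "grid_chains N n = {T. T \<subseteq> (\<Pi>\<^sub>E j\<in>UNIV. {1..int N}) \<and> card T = n \<and> coord_chain T}"

lemma finite_grid_chain:
  fixes T :: "('j::finite \<Rightarrow> int) set"
  assumes "T \<in> grid_chains N n"
  shows "finite T"
proof -
  have "finite (\<Pi>\<^sub>E j\<in>(UNIV::'j set). {1..int N})" by (intro finite_PiE) auto
  then show ?thesis using assms by (auto simp: grid_chains_def intro: finite_subset)
qed

lemma finite_grid_chains: "finite (grid_chains N n)"
proof (rule finite_subset)
  show "grid_chains N n \<subseteq> Pow (\<Pi>\<^sub>E j\<in>UNIV. {1..int N})"
    by (auto simp: grid_chains_def)
qed (intro finite_Pow_iff[THEN iffD2] finite_PiE; simp)

text \<open>A chain is determined by its coordinate projections, each an \<open>n\<close>-subset of \<open>{1..N}\<close>.\<close>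

lemma card_grid_chains_le:
  "card (grid_chains N n :: ('j::finite \<Rightarrow> int) set set) \<le> (N choose n) ^ CARD('j)"
proof -
  let ?proj = "\<lambda>T::('j \<Rightarrow> int) set. \<lambda>j. (\<lambda>c. c j) ` T"
  let ?Q = "{P. P \<subseteq> {1..int N} \<and> card P = n}"
  have inj: "inj_on ?proj (grid_chains N n)"
  proof (rule inj_onI)
    fix T T' assume T: "T \<in> grid_chains N n" and T': "T' \<in> grid_chains N n"
      and eq: "?proj T = ?proj T'"
    have ch: "coord_chain T" "coord_chain T'" using T T' by (simp_all add: grid_chains_def)
    have fin: "finite T" "finite T'" using T T' by (simp_all add: finite_grid_chain)
    have proj: "(\<lambda>c. c j) ` T = (\<lambda>c. c j) ` T'" for j using eq by (simp add: fun_eq_iff)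
    show "T = T'"
      using coord_chain_subset_if_proj_eq[OF ch(1,2) fin(1) proj]
        coord_chain_subset_if_proj_eq[OF ch(2,1) fin(2) proj[symmetric]] by (rule subset_antisym)
  qed
  have sub: "?proj ` grid_chains N n \<subseteq> (\<Pi>\<^sub>E j\<in>UNIV. ?Q)"
  proof
    fix P assume "P \<in> ?proj ` grid_chains N n"
    then obtain T where T: "T \<in> grid_chains N n" and P: "P = ?proj T" by blast
    have "(\<lambda>c. c j) ` T \<in> ?Q" for j
      using T card_image[OF inj_on_proj_coord_chain, of T j] by (auto simp: grid_chains_def PiE_iff)
    then show "P \<in> (\<Pi>\<^sub>E j\<in>UNIV. ?Q)" using P by auto
  qed
  have fin: "finite (\<Pi>\<^sub>E j\<in>(UNIV::'j set). ?Q)"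
    by (rule finite_PiE) (auto intro: finite_subset[of _ "Pow {1..int N}"])
  have "card (grid_chains N n :: ('j \<Rightarrow> int) set set) = card (?proj ` grid_chains N n)"
    by (rule card_image[OF inj, symmetric])
  also have "\<dots> \<le> card (\<Pi>\<^sub>E j\<in>(UNIV::'j set). ?Q)"
    by (rule card_mono[OF fin sub])
  also have "\<dots> = (N choose n) ^ CARD('j)"
    using n_subsets[of "{1..int N}" n] by (simp add: card_PiE)
  finally show ?thesis .
qed

section \<open>Grids on boxes in \<open>\<real>\<^sup>d \<times> \<real>\<close>\<close>

lemma all_option_split: "(\<forall>j. P j) \<longleftrightarrow> P None \<and> (\<forall>i. P (Some i))"
  by (metis option.exhaust)

lemma prod_UNIV_option:
  "(\<Prod>j\<in>(UNIV::'a::finite option set). f j) = f None * (\<Prod>i\<in>UNIV. f (Some i))"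
proof -
  have "(\<Prod>j\<in>(UNIV::'a option set). f j) = (\<Prod>j\<in>insert None (range Some). f j)"
    by (simp add: UNIV_option_conv)
  also have "\<dots> = f None * (\<Prod>i\<in>UNIV. f (Some i))"
    by (simp add: prod.reindex)
  finally show ?thesis .
qed

text \<open>Points of \<open>\<real>\<^sup>d \<times> \<real>\<close> have coordinates indexed by \<open>'n option\<close>, with \<open>None\<close> the time axis.\<close>

definition coord :: "'n option \<Rightarrow> (real^'n) \<times> real \<Rightarrow> real" where
  "coord j p = (case j of Some i \<Rightarrow> fst p $ i | None \<Rightarrow> snd p)"

definition of_coords :: "('n option \<Rightarrow> real) \<Rightarrow> (real^'n) \<times> real" where
  "of_coords f = ((\<chi> i. f (Some i)), f None)"

lemma coord_diff [simp]: "coord j (p - p') = coord j p - coord j p'"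
  by (cases j) (simp_all add: coord_def)

lemma coord_mono: "a \<le> b \<Longrightarrow> coord j a \<le> coord j b"
  by (cases j) (auto simp: coord_def less_eq_prod_def less_eq_vec_def)

lemma continuous_on_coord: "continuous_on UNIV (coord j)"
  by (cases j) (auto simp: coord_def intro!: continuous_intros)

lemma slt_iff_coord: "slt p p' \<longleftrightarrow> (\<forall>j. coord j p < coord j p')"
  by (simp add: all_option_split slt_def vlt_def coord_def conj_commute)

lemma prod_coord: "(\<Prod>j\<in>UNIV. coord j p) = vfact (fst p) * snd p"
  by (simp add: prod_UNIV_option vfact_def coord_def mult.commute)

lemma mem_cbox_of_coords:
  "p \<in> cbox (of_coords u) (of_coords v) \<longleftrightarrow> (\<forall>j. u j \<le> coord j p \<and> coord j p \<le> v j)"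
  by (cases p) (simp add: all_option_split of_coords_def coord_def mem_box_cart conj_commute)

lemma measure_cbox_of_coords:
  assumes "\<And>j. u j \<le> v j"
  shows "measure lborel (cbox (of_coords u) (of_coords v)) = (\<Prod>j\<in>UNIV. v j - u j)"
proof -
  let ?x = "\<chi> i. u (Some i)" and ?y = "\<chi> i. v (Some i)"
  have "?x \<in> cbox ?x ?y" using assms by (simp add: mem_box_cart)
  then have "measure lborel (cbox ?x ?y) = (\<Prod>i\<in>UNIV. v (Some i) - u (Some i))"
    by (subst content_cbox_cart) auto
  moreover have "measure lborel (cbox (u None) (v None)) = v None - u None"
    using assms by simp
  ultimately show ?thesis
    by (simp add: of_coords_def content_Pair prod_UNIV_option mult.commute)
qed

definition ocbox :: "(real^'n) \<times> real \<Rightarrow> (real^'n) \<times> real \<Rightarrow> ((real^'n) \<times> real) set" where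
  "ocbox a b = {p. \<forall>j. coord j a < coord j p \<and> coord j p \<le> coord j b}"

lemma ocbox_empty:
  assumes "\<not> slt a b"
  shows "ocbox a b = {}"
proof (rule equals0I)
  obtain j where j: "coord j b \<le> coord j a" using assms by (auto simp: slt_iff_coord not_less)
  fix p assume "p \<in> ocbox a b"
  then have "coord j a < coord j p" "coord j p \<le> coord j b" by (auto simp: ocbox_def)
  then show False using j by linarith
qed

definition grid_index ::
    "nat \<Rightarrow> (real^'n) \<times> real \<Rightarrow> (real^'n) \<times> real \<Rightarrow> (real^'n) \<times> real \<Rightarrow> 'n option \<Rightarrow> int" where
  "grid_index N a b p j = \<lceil>real N * (coord j p - coord j a) / (coord j b - coord j a)\<rceil>"

definition grid_cell ::
    "nat \<Rightarrow> (real^'n) \<times> real \<Rightarrow> (real^'n) \<times> real \<Rightarrow> ('n option \<Rightarrow> int) \<Rightarrow> ((real^'n) \<times> real) set"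
  where "grid_cell N a b c = {p. grid_index N a b p = c}"

lemma grid_index_mem:
  assumes "slt a b" "N > 0" "p \<in> ocbox a b"
  shows "grid_index N a b p j \<in> {1..int N}"
proof -
  let ?L = "coord j b - coord j a"
  have L: "?L > 0" using assms(1) by (simp add: slt_iff_coord)
  have p: "coord j a < coord j p" "coord j p \<le> coord j b"
    using assms(3) by (auto simp: ocbox_def)
  have "0 < real N * (coord j p - coord j a) / ?L"
    using L p assms(2) by simp
  moreover have "real N * (coord j p - coord j a) \<le> real N * ?L"
    using p by (intro mult_left_mono) auto
  then have "real N * (coord j p - coord j a) / ?L \<le> real N"
    using L by (simp add: divide_le_eq)
  ultimately show ?thesis by (simp add: grid_index_def ceiling_le_iff)
qed

lemma grid_cell_borel: "grid_cell N a b c \<in> sets borel"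
proof -
  define f where "f j p = (coord j p - coord j a) * (real N / (coord j b - coord j a))" for j p
  have cont: "continuous_on UNIV (f j)" for j
    unfolding f_def by (intro continuous_intros continuous_on_coord)
  have "grid_cell N a b c = (\<Inter>j. {p. of_int (c j) - 1 < f j p} \<inter> {p. f j p \<le> of_int (c j)})"
    by (auto simp: grid_cell_def grid_index_def f_def ceiling_eq_iff fun_eq_iff mult.commute)
  also have "\<dots> \<in> sets borel"
    using cont by (intro sets.finite_INT sets.Int borel_open borel_closed open_Collect_less
        closed_Collect_le continuous_intros) auto
  finally show ?thesis .
qed

lemma ceiling_scaled_eq_iff:
  fixes x a L :: real
  assumes "L > 0" "N > 0"
  shows "\<lceil>real N * (x - a) / L\<rceil> = k \<longleftrightarrow>
    a + L * (of_int k - 1) / real N < x \<and> x \<le> a + L * of_int k / real N"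
proof -
  have "of_int k - 1 < real N * (x - a) / L \<longleftrightarrow> a + L * (of_int k - 1) / real N < x"
    using assms by (simp add: field_simps)
  moreover have "real N * (x - a) / L \<le> of_int k \<longleftrightarrow> x \<le> a + L * of_int k / real N"
    using assms by (simp add: field_simps)
  ultimately show ?thesis by (simp add: ceiling_eq_iff)
qed

lemma grid_cell_subset_cbox:
  assumes "slt a b" "N > 0"
  shows "grid_cell N a b c \<subseteq>
    cbox (of_coords (\<lambda>j. coord j a + coord j (b - a) * (of_int (c j) - 1) / real N))
         (of_coords (\<lambda>j. coord j a + coord j (b - a) * of_int (c j) / real N))"
proof
  fix p assume "p \<in> grid_cell N a b c"
  moreover have "coord j (b - a) > 0" for j using assms(1) by (simp add: slt_iff_coord)
  ultimately have "coord j a + coord j (b - a) * (of_int (c j) - 1) / real N < coord j p \<and>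
      coord j p \<le> coord j a + coord j (b - a) * of_int (c j) / real N" for j
    using ceiling_scaled_eq_iff[of "coord j (b - a)" N "coord j p" "coord j a" "c j"] assms(2)
    by (auto simp: grid_cell_def grid_index_def)
  then show "p \<in> cbox (of_coords (\<lambda>j. coord j a + coord j (b - a) * (of_int (c j) - 1) / real N))
         (of_coords (\<lambda>j. coord j a + coord j (b - a) * of_int (c j) / real N))"
    by (auto simp: mem_cbox_of_coords less_imp_le)
qed

lemma measure_grid_cell_le:
  assumes "slt a b" "N > 0"
  shows "measure lborel (grid_cell N a b c) \<le> (\<Prod>j\<in>UNIV. coord j (b - a) / real N)"
proof -
  have L: "coord j (b - a) > 0" for j using assms(1) by (simp add: slt_iff_coord)
  have "measure lborel (grid_cell N a b c) \<le>
      measure lborel (cbox (of_coords (\<lambda>j. coord j a + coord j (b - a) * (of_int (c j) - 1) / real N))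
         (of_coords (\<lambda>j. coord j a + coord j (b - a) * of_int (c j) / real N)))"
    by (rule measure_mono_fmeasurable[OF grid_cell_subset_cbox[OF assms]])
      (simp_all add: grid_cell_borel)
  also have "\<dots> = (\<Prod>j\<in>UNIV. coord j (b - a) / real N)"
  proof (subst measure_cbox_of_coords)
    show "coord j a + coord j (b - a) * (of_int (c j) - 1) / real N
        \<le> coord j a + coord j (b - a) * of_int (c j) / real N" for j
      using L[of j] assms(2) by (simp add: divide_right_mono)
    have "real N \<noteq> 0" using assms(2) by simp
    then show "(\<Prod>j\<in>UNIV. coord j a + coord j (b - a) * of_int (c j) / real N
        - (coord j a + coord j (b - a) * (of_int (c j) - 1) / real N))
        = (\<Prod>j\<in>UNIV. coord j (b - a) / real N)"
      by (intro prod.cong refl) (simp add: field_simps)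
  qed
  finally show ?thesis .
qed

lemma bounded_grid_cell:
  assumes "slt a b" "N > 0"
  shows "bounded (grid_cell N a b c)"
  using grid_cell_subset_cbox[OF assms] by (rule bounded_subset[OF bounded_cbox])

lemma grid_cell_subset_positive_time:
  assumes "slt a b" "N > 0" "0 \<le> snd a" "1 \<le> c None"
  shows "grid_cell N a b c \<subseteq> {p. 0 < snd p}"
proof
  fix p assume "p \<in> grid_cell N a b c"
  then have "0 < real N * (snd p - snd a) / (snd b - snd a)"
    using assms(4) by (auto simp: grid_cell_def grid_index_def coord_def ceiling_eq_iff[symmetric])
  moreover have "snd a < snd b" using assms(1) by (simp add: slt_def)
  ultimately show "p \<in> {p. 0 < snd p}"
    using assms(2,3) by (simp add: zero_less_divide_iff zero_less_mult_iff)
qed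

lemma eventually_ceiling_less:
  fixes u v :: real
  assumes "u < v"
  shows "eventually (\<lambda>N. \<lceil>real N * u\<rceil> < \<lceil>real N * v\<rceil>) sequentially"
proof -
  obtain N0 :: nat where N0: "1 / (v - u) < real N0"
    using reals_Archimedean2 by blast
  show ?thesis
  proof (rule eventually_mono[OF eventually_ge_at_top[of N0]])
    fix N assume "N0 \<le> N"
    then have "1 < real N * (v - u)"
      using N0 assms by (simp add: divide_less_eq) (smt (verit) mult_right_mono of_nat_mono)
    then have "of_int \<lceil>real N * u\<rceil> < real N * v"
      by (smt (verit) ceiling_correct right_diff_distrib)
    then show "\<lceil>real N * u\<rceil> < \<lceil>real N * v\<rceil>"
      by (simp add: less_ceiling_iff)
  qed
qed

lemma eventually_grid_index_less:
  assumes "slt a b" "slt p p'"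
  shows "eventually (\<lambda>N. coord_less (grid_index N a b p) (grid_index N a b p')) sequentially"
  unfolding coord_less_def grid_index_def
proof (rule eventually_all_finite)
  fix j
  have "(coord j p - coord j a) / (coord j b - coord j a) < (coord j p' - coord j a) / (coord j b - coord j a)"
    using assms by (simp add: slt_iff_coord divide_strict_right_mono)
  from eventually_ceiling_less[OF this]
  show "eventually (\<lambda>N. \<lceil>real N * (coord j p - coord j a) / (coord j b - coord j a)\<rceil>
      < \<lceil>real N * (coord j p' - coord j a) / (coord j b - coord j a)\<rceil>) sequentially"
    by simp
qed

definition has_chain ::
    "(real^'n) \<times> real \<Rightarrow> (real^'n) \<times> real \<Rightarrow> nat \<Rightarrow> ((real^'n) \<times> real) set \<Rightarrow> bool" where
  "has_chain a b n P \<longleftrightarrow> (\<exists>C. finite C \<and> C \<subseteq> P \<inter> ocbox a b \<and> card C = n \<and>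
     pairwise (\<lambda>p p'. slt p p' \<or> slt p' p) C)"

text \<open>Once the grid is fine enough to separate all coordinates of a chain of points,
  the cells containing these points form a chain of grid indices.\<close>

lemma eventually_grid_chain:
  assumes "has_chain a b n P" "slt a b"
  shows "eventually (\<lambda>N. \<exists>T\<in>grid_chains N n. \<forall>c\<in>T. P \<inter> grid_cell N a b c \<noteq> {}) sequentially"
proof -
  obtain C where C: "finite C" "C \<subseteq> P \<inter> ocbox a b" "card C = n"
    and chain: "pairwise (\<lambda>p p'. slt p p' \<or> slt p' p) C"
    using assms(1) unfolding has_chain_def by blast
  have "eventually (\<lambda>N. slt p p' \<longrightarrow> coord_less (grid_index N a b p) (grid_index N a b p')) sequentially"
    for p p'
    using eventually_grid_index_less[OF assms(2)] by (cases "slt p p'") auto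
  then have "eventually (\<lambda>N. \<forall>p\<in>C. \<forall>p'\<in>C.
      slt p p' \<longrightarrow> coord_less (grid_index N a b p) (grid_index N a b p')) sequentially"
    using C(1) by (intro eventually_ball_finite ballI) auto
  moreover have "eventually (\<lambda>N. 0 < N) sequentially" by (rule eventually_gt_at_top)
  ultimately show ?thesis
  proof eventually_elim
    case (elim N)
    let ?g = "grid_index N a b"
    have less: "coord_less (?g p) (?g p') \<or> coord_less (?g p') (?g p)"
      if "p \<in> C" "p' \<in> C" "p \<noteq> p'" for p p'
      using chain elim that unfolding pairwise_def by blast
    have inj: "inj_on ?g C"
      by (rule inj_onI, rule ccontr) (use less in \<open>fastforce simp: coord_less_def\<close>)
    have "?g ` C \<in> grid_chains N n"
      unfolding grid_chains_def coord_chain_def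
    proof (intro CollectI conjI)
      show "?g ` C \<subseteq> (\<Pi>\<^sub>E j\<in>UNIV. {1..int N})"
        using C(2) grid_index_mem[OF assms(2) elim(2)] by (auto simp: PiE_UNIV_domain)
      show "card (?g ` C) = n" using C(3) by (simp add: card_image[OF inj])
      show "pairwise (\<lambda>c c'. coord_less c c' \<or> coord_less c' c) (?g ` C)"
        unfolding pairwise_image
      proof (rule pairwiseI, rule impI)
        fix p p' assume "p \<in> C" "p' \<in> C" "p \<noteq> p'"
        then show "coord_less (?g p) (?g p') \<or> coord_less (?g p') (?g p)" by (rule less)
      qed
    qed
    moreover have "\<forall>c\<in>?g ` C. P \<inter> grid_cell N a b c \<noteq> {}"
      using C(2) by (auto simp: grid_cell_def)
    ultimately show ?case by blast
  qed
qed

section \<open>Increasing chains of Poisson points\<close>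

definition outer_measure_le :: "'a measure \<Rightarrow> 'a set \<Rightarrow> real \<Rightarrow> bool" where
  "outer_measure_le M A r \<longleftrightarrow> (\<exists>E\<in>sets M. A \<subseteq> E \<and> measure M E \<le> r)"

lemma outer_measure_le_mono:
  "outer_measure_le M B r \<Longrightarrow> A \<subseteq> B \<Longrightarrow> r \<le> s \<Longrightarrow> outer_measure_le M A s"
  unfolding outer_measure_le_def by (blast intro: order_trans)

lemma outer_measure_le_empty: "0 \<le> r \<Longrightarrow> outer_measure_le M {} r"
  unfolding outer_measure_le_def by (intro bexI[of _ "{}"]) auto

lemma outer_measure_le_UN:
  assumes "finite I" "\<And>i. i \<in> I \<Longrightarrow> outer_measure_le M (A i) (r i)"
  shows "outer_measure_le M (\<Union>i\<in>I. A i) (\<Sum>i\<in>I. r i)"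
proof -
  have ex: "\<forall>i\<in>I. \<exists>E. E \<in> sets M \<and> A i \<subseteq> E \<and> measure M E \<le> r i"
    using assms(2) by (auto simp: outer_measure_le_def)
  obtain E where E: "\<And>i. i \<in> I \<Longrightarrow> E i \<in> sets M \<and> A i \<subseteq> E i \<and> measure M (E i) \<le> r i"
    using bchoice[OF ex] by blast
  have "measure M (\<Union>i\<in>I. E i) \<le> (\<Sum>i\<in>I. measure M (E i))"
    using assms(1) E by (intro measure_UNION_le) auto
  also have "\<dots> \<le> (\<Sum>i\<in>I. r i)"
    using E by (intro sum_mono) auto
  finally show ?thesis
    unfolding outer_measure_le_def using assms(1) E by (intro bexI[of _ "\<Union>i\<in>I. E i"]) auto
qed

lemma (in finite_measure) outer_measure_le_UN_nat:
  assumes "\<And>i. outer_measure_le M (A i) (r i)" "summable r"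
  shows "outer_measure_le M (\<Union>i. A i) (\<Sum>i. r i)"
proof -
  have ex: "\<forall>i. \<exists>E. E \<in> sets M \<and> A i \<subseteq> E \<and> measure M E \<le> r i"
    using assms(1) by (auto simp: outer_measure_le_def)
  obtain E where E: "\<And>i. E i \<in> sets M \<and> A i \<subseteq> E i \<and> measure M (E i) \<le> r i"
    using choice[OF ex] by blast
  have summable: "summable (\<lambda>i. measure M (E i))"
    using E by (intro summable_comparison_test'[OF assms(2)]) auto
  have "measure M (\<Union>i. E i) \<le> (\<Sum>i. measure M (E i))"
    using E summable by (intro finite_measure_subadditive_countably) auto
  also have "\<dots> \<le> (\<Sum>i. r i)"
    using E summable assms(2) by (intro suminf_le) auto
  finally show ?thesis
    unfolding outer_measure_le_def using E by (intro bexI[of _ "\<Union>i. E i"]) auto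
qed

lemma poisson_ppD:
  assumes "poisson_pp M Pts"
  shows "prob_space M"
    and "A \<in> sets borel \<Longrightarrow> bounded A \<Longrightarrow> \<omega> \<in> space M \<Longrightarrow> finite (Pts \<omega> \<inter> A)"
    and "A \<in> sets borel \<Longrightarrow> bounded A \<Longrightarrow>
      (\<lambda>\<omega>. card (Pts \<omega> \<inter> A)) \<in> measurable M (count_space UNIV)"
    and "A \<in> sets borel \<Longrightarrow> bounded A \<Longrightarrow> A \<subseteq> {p. 0 < snd p} \<Longrightarrow>
      measure M {\<omega>\<in>space M. card (Pts \<omega> \<inter> A) = k}
        = exp (- measure lborel A) * measure lborel A ^ k / fact k"
  using assms by (simp_all add: poisson_pp_def)

lemma poisson_pp_indep_vars:
  fixes Pts :: "'w \<Rightarrow> ((real^'n) \<times> real) set" and F :: "nat \<Rightarrow> ((real^'n) \<times> real) set"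
  assumes "poisson_pp M Pts" "\<forall>i<n. F i \<in> sets borel \<and> bounded (F i)" "disjoint_family_on F {..<n}"
  shows "prob_space.indep_vars M (\<lambda>_. count_space UNIV) (\<lambda>i \<omega>. card (Pts \<omega> \<inter> F i)) {..<n}"
proof -
  have indep: "\<And>(F :: nat \<Rightarrow> ((real^'n) \<times> real) set) n.
      \<forall>i<n. F i \<in> sets borel \<and> bounded (F i) \<Longrightarrow> disjoint_family_on F {..<n} \<Longrightarrow>
      prob_space.indep_vars M (\<lambda>_. count_space UNIV) (\<lambda>i \<omega>. card (Pts \<omega> \<inter> F i)) {..<n}"
    using assms(1) by (simp add: poisson_pp_def)
  show ?thesis by (rule indep[OF assms(2,3)])
qed

lemma poisson_hit_eq_vimage:
  assumes "poisson_pp M Pts" "A \<in> sets borel" "bounded A"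
  shows "{\<omega>\<in>space M. Pts \<omega> \<inter> A \<noteq> {}} = (\<lambda>\<omega>. card (Pts \<omega> \<inter> A)) -` {1..} \<inter> space M"
  using poisson_ppD(2)[OF assms] by (auto simp: card_gt_0_iff Suc_le_eq)

lemma sets_poisson_hit:
  assumes "poisson_pp M Pts" "A \<in> sets borel" "bounded A"
  shows "{\<omega>\<in>space M. Pts \<omega> \<inter> A \<noteq> {}} \<in> sets M"
  unfolding poisson_hit_eq_vimage[OF assms]
  using poisson_ppD(3)[OF assms] by (rule measurable_sets) simp

lemma measure_poisson_hit_le:
  assumes "poisson_pp M Pts" "A \<in> sets borel" "bounded A" "A \<subseteq> {p. 0 < snd p}"
  shows "measure M {\<omega>\<in>space M. Pts \<omega> \<inter> A \<noteq> {}} \<le> measure lborel A"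
proof -
  interpret prob_space M by (rule poisson_ppD(1)[OF assms(1)])
  have "space M - {\<omega>\<in>space M. Pts \<omega> \<inter> A \<noteq> {}} = {\<omega>\<in>space M. card (Pts \<omega> \<inter> A) = 0}"
    using poisson_ppD(2)[OF assms(1-3)] by auto
  then have "1 - prob {\<omega>\<in>space M. Pts \<omega> \<inter> A \<noteq> {}} = exp (- measure lborel A)"
    using prob_compl[OF sets_poisson_hit[OF assms(1-3)]] poisson_ppD(4)[OF assms, of 0] by simp
  moreover have "1 - measure lborel A \<le> exp (- measure lborel A)"
    using exp_ge_add_one_self[of "- measure lborel A"] by simp
  ultimately show ?thesis by simp
qed

lemma measure_poisson_hit_all_le:
  assumes pp: "poisson_pp M Pts" and T: "finite T" "T \<noteq> {}"
    and A: "\<And>c. c \<in> T \<Longrightarrow> A c \<in> sets borel \<and> bounded (A c) \<and> A c \<subseteq> {p. 0 < snd p}"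
    and disj: "disjoint_family_on A T"
  shows "measure M (\<Inter>c\<in>T. {\<omega>\<in>space M. Pts \<omega> \<inter> A c \<noteq> {}}) \<le> (\<Prod>c\<in>T. measure lborel (A c))"
proof -
  interpret prob_space M by (rule poisson_ppD(1)[OF pp])
  obtain e where e: "bij_betw e {..<card T} T"
    using ex_bij_betw_nat_finite[OF T(1)] by (auto simp: atLeast0LessThan)
  let ?hit = "\<lambda>c. {\<omega>\<in>space M. Pts \<omega> \<inter> A c \<noteq> {}}"
  have Ae: "A (e i) \<in> sets borel \<and> bounded (A (e i)) \<and> A (e i) \<subseteq> {p. 0 < snd p}"
    if "i < card T" for i
    using A e that by (auto simp: bij_betw_def)
  have "disjoint_family_on (\<lambda>i. A (e i)) {..<card T}"
    unfolding disjoint_family_on_def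
  proof (intro ballI impI)
    fix i j assume "i \<in> {..<card T}" "j \<in> {..<card T}" "i \<noteq> j"
    then show "A (e i) \<inter> A (e j) = {}"
      using disj e unfolding disjoint_family_on_def bij_betw_def inj_on_def by blast
  qed
  then have "indep_vars (\<lambda>_. count_space UNIV) (\<lambda>i \<omega>. card (Pts \<omega> \<inter> A (e i))) {..<card T}"
    using Ae by (intro poisson_pp_indep_vars[OF pp]) auto
  then have "indep_sets (\<lambda>i. {(\<lambda>\<omega>. card (Pts \<omega> \<inter> A (e i))) -` B \<inter> space M | B. B \<in> sets (count_space UNIV)})
      {..<card T}"
    by (simp add: indep_vars_def2)
  then have "prob (\<Inter>i\<in>{..<card T}. ?hit (e i)) = (\<Prod>i\<in>{..<card T}. prob (?hit (e i)))"
    using T Ae by (intro indep_setsD) (auto simp: poisson_hit_eq_vimage[OF pp] lessThan_empty_iff)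
  also have "\<dots> \<le> (\<Prod>i\<in>{..<card T}. measure lborel (A (e i)))"
    using Ae measure_poisson_hit_le[OF pp] by (intro prod_mono) auto
  also have "\<dots> = (\<Prod>c\<in>T. measure lborel (A c))"
    by (rule prod.reindex_bij_betw[OF e])
  moreover have "(\<Inter>i\<in>{..<card T}. ?hit (e i)) = (\<Inter>c\<in>e ` {..<card T}. ?hit c)"
    by simp
  then have "(\<Inter>i\<in>{..<card T}. ?hit (e i)) = (\<Inter>c\<in>T. ?hit c)"
    by (simp only: bij_betw_imp_surj_on[OF e])
  ultimately show ?thesis by simp
qed

lemma binomial_mult_power_le:
  fixes x :: real
  assumes "0 \<le> x" "N > 0"
  shows "real (N choose n) * (x / real N) ^ n \<le> x ^ n / fact n"
proof -
  have "real (N choose n) * fact n \<le> real N ^ n"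
    using binomial_fact_pow[of N n] by (metis of_nat_fact of_nat_le_iff of_nat_mult of_nat_power)
  then have "real (N choose n) * fact n * (x / real N) ^ n \<le> real N ^ n * (x / real N) ^ n"
    using assms by (intro mult_right_mono) auto
  also have "\<dots> = x ^ n"
    using assms(2) by (simp add: power_divide)
  finally show ?thesis by (simp add: field_simps)
qed

definition grid_chain_event ::
    "'w measure \<Rightarrow> ('w \<Rightarrow> ((real^'n) \<times> real) set) \<Rightarrow> nat \<Rightarrow> (real^'n) \<times> real \<Rightarrow>
      (real^'n) \<times> real \<Rightarrow> nat \<Rightarrow> 'w set" where
  "grid_chain_event M Pts N a b n =
     (\<Union>T\<in>grid_chains N n. \<Inter>c\<in>T. {\<omega>\<in>space M. Pts \<omega> \<inter> grid_cell N a b c \<noteq> {}})"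

lemma grid_chain_cells:
  assumes "T \<in> grid_chains N n" "n > 0" "slt a b" "N > 0" "0 \<le> snd a"
  shows "finite T" "T \<noteq> {}" "disjoint_family_on (grid_cell N a b) T"
    and "c \<in> T \<Longrightarrow> grid_cell N a b c \<in> sets borel \<and> bounded (grid_cell N a b c) \<and>
      grid_cell N a b c \<subseteq> {p. 0 < snd p}"
proof -
  show "finite T" by (rule finite_grid_chain[OF assms(1)])
  then show "T \<noteq> {}" using assms(1,2) by (auto simp: grid_chains_def)
  show "disjoint_family_on (grid_cell N a b) T"
    by (auto simp: disjoint_family_on_def grid_cell_def)
  assume "c \<in> T"
  then have "1 \<le> c None" using assms(1) by (auto simp: grid_chains_def PiE_iff)
  then show "grid_cell N a b c \<in> sets borel \<and> bounded (grid_cell N a b c) \<and>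
      grid_cell N a b c \<subseteq> {p. 0 < snd p}"
    using assms(3-5) by (simp add: grid_cell_borel bounded_grid_cell grid_cell_subset_positive_time)
qed

lemma sets_grid_chain_hits:
  assumes "poisson_pp M Pts" "T \<in> grid_chains N n" "n > 0" "slt a b" "N > 0" "0 \<le> snd a"
  shows "(\<Inter>c\<in>T. {\<omega>\<in>space M. Pts \<omega> \<inter> grid_cell N a b c \<noteq> {}}) \<in> sets M"
  using grid_chain_cells[OF assms(2-6)] sets_poisson_hit[OF assms(1)]
  by (intro sets.finite_INT) auto

lemma sets_grid_chain_event:
  assumes "poisson_pp M Pts" "n > 0" "slt a b" "N > 0" "0 \<le> snd a"
  shows "grid_chain_event M Pts N a b n \<in> sets M"
  unfolding grid_chain_event_def
  using sets_grid_chain_hits[OF assms(1) _ assms(2-5)] finite_grid_chains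
  by (intro sets.finite_UN) auto

text \<open>A union bound over the at most \<open>(N choose n)\<^sup>d\<^sup>+\<^sup>1\<close> chains of cells; by independence,
  all \<open>n\<close> cells of a chain are occupied with probability at most the product of their volumes.\<close>

lemma measure_grid_chain_event_le:
  fixes Pts :: "'w \<Rightarrow> ((real^'n) \<times> real) set"
  assumes pp: "poisson_pp M Pts" and "n > 0" "slt a b" "N > 0" "0 \<le> snd a"
  shows "measure M (grid_chain_event M Pts N a b n) \<le> (\<Prod>j\<in>UNIV. coord j (b - a) ^ n / fact n)"
proof -
  let ?hit = "\<lambda>c. {\<omega>\<in>space M. Pts \<omega> \<inter> grid_cell N a b c \<noteq> {}}"
  define w where "w = (\<Prod>j\<in>UNIV. coord j (b - a) / real N)"
  have L: "0 < coord j (b - a)" for j using assms(3) by (simp add: slt_iff_coord)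
  have chain_le: "measure M (\<Inter>c\<in>T. ?hit c) \<le> w ^ n" if T: "T \<in> grid_chains N n" for T
  proof -
    note cells = grid_chain_cells[OF T assms(2-5)]
    have "measure M (\<Inter>c\<in>T. ?hit c) \<le> (\<Prod>c\<in>T. measure lborel (grid_cell N a b c))"
      using cells by (intro measure_poisson_hit_all_le[OF pp]) auto
    also have "\<dots> \<le> (\<Prod>c\<in>T. w)"
      unfolding w_def using measure_grid_cell_le[OF assms(3,4)] by (intro prod_mono) auto
    also have "\<dots> = w ^ n" using T by (simp add: grid_chains_def)
    finally show ?thesis .
  qed
  have "measure M (grid_chain_event M Pts N a b n) \<le> (\<Sum>T\<in>grid_chains N n. measure M (\<Inter>c\<in>T. ?hit c))"
    unfolding grid_chain_event_def
    by (rule measure_UNION_le[OF finite_grid_chains sets_grid_chain_hits[OF pp _ assms(2-5)]])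
  also have "\<dots> \<le> (\<Sum>T\<in>(grid_chains N n :: ('n option \<Rightarrow> int) set set). w ^ n)"
    by (rule sum_mono) (rule chain_le)
  also have "\<dots> = real (card (grid_chains N n :: ('n option \<Rightarrow> int) set set)) * w ^ n"
    by simp
  also have "\<dots> \<le> real ((N choose n) ^ CARD('n option)) * w ^ n"
  proof (rule mult_right_mono)
    show "real (card (grid_chains N n :: ('n option \<Rightarrow> int) set set))
        \<le> real ((N choose n) ^ CARD('n option))"
      by (rule of_nat_mono[OF card_grid_chains_le])
    show "0 \<le> w ^ n" unfolding w_def using L by (simp add: less_imp_le prod_nonneg)
  qed
  also have "\<dots> = (\<Prod>j\<in>UNIV. real (N choose n) * (coord j (b - a) / real N) ^ n)"
    by (simp add: w_def prod.distrib prod_power_distrib)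
  also have "\<dots> \<le> (\<Prod>j\<in>UNIV. coord j (b - a) ^ n / fact n)"
    using L assms(4) by (intro prod_mono conjI binomial_mult_power_le) (auto simp: less_imp_le)
  finally show ?thesis .
qed

text \<open>The chain event need not be measurable; it is covered by the increasing union over \<open>m\<close>
  of the events that the grid chain event occurs for every grid size beyond \<open>m\<close>.\<close>

lemma outer_measure_has_chain_le_prod:
  fixes Pts :: "'w \<Rightarrow> ((real^'n) \<times> real) set"
  assumes pp: "poisson_pp M Pts" and "slt a b" "0 \<le> snd a" "n > 0"
  shows "outer_measure_le M {\<omega>\<in>space M. has_chain a b n (Pts \<omega>)}
    (\<Prod>j\<in>UNIV. coord j (b - a) ^ n / fact n)"
proof -
  interpret prob_space M by (rule poisson_ppD(1)[OF pp])
  define D where "D m = (\<Inter>N\<in>{Suc m..}. grid_chain_event M Pts N a b n)" for m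
  have D_sets: "D m \<in> sets M" for m
    unfolding D_def using sets_grid_chain_event[OF pp assms(4,2) _ assms(3)]
    by (intro sets.countable_INT') auto
  have D_le: "measure M (D m) \<le> (\<Prod>j\<in>UNIV. coord j (b - a) ^ n / fact n)" for m
  proof -
    have "measure M (D m) \<le> measure M (grid_chain_event M Pts (Suc m) a b n)"
      using sets_grid_chain_event[OF pp assms(4,2) _ assms(3)]
      by (intro finite_measure_mono) (auto simp: D_def)
    also have "\<dots> \<le> (\<Prod>j\<in>UNIV. coord j (b - a) ^ n / fact n)"
      by (rule measure_grid_chain_event_le[OF pp assms(4,2) _ assms(3)]) simp
    finally show ?thesis .
  qed
  have "incseq D"
    by (rule incseq_SucI) (auto simp: D_def)
  then have "measure M (\<Union>m. D m) \<le> (\<Prod>j\<in>UNIV. coord j (b - a) ^ n / fact n)"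
    using D_sets D_le by (intro LIMSEQ_le_const2[OF finite_Lim_measure_incseq]) auto
  moreover have "{\<omega>\<in>space M. has_chain a b n (Pts \<omega>)} \<subseteq> (\<Union>m. D m)"
  proof
    fix \<omega> assume \<omega>: "\<omega> \<in> {\<omega>\<in>space M. has_chain a b n (Pts \<omega>)}"
    then obtain N0 where "\<forall>N\<ge>N0. \<exists>T\<in>grid_chains N n. \<forall>c\<in>T. Pts \<omega> \<inter> grid_cell N a b c \<noteq> {}"
      using eventually_grid_chain[OF _ assms(2)] unfolding eventually_sequentially by blast
    then have "\<omega> \<in> D N0" using \<omega> by (auto simp: D_def grid_chain_event_def)
    then show "\<omega> \<in> (\<Union>m. D m)" by blast
  qed
  ultimately show ?thesis
    unfolding outer_measure_le_def using D_sets by (intro bexI[of _ "\<Union>m. D m"]) auto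
qed

lemma outer_measure_has_chain_le:
  fixes Pts :: "'w \<Rightarrow> ((real^'n) \<times> real) set"
  assumes pp: "poisson_pp M Pts" and "a \<le> b" "0 \<le> snd a" "n > 0"
  shows "outer_measure_le M {\<omega>\<in>space M. has_chain a b n (Pts \<omega>)}
    ((\<Prod>j\<in>UNIV. coord j (b - a)) ^ n / fact n ^ CARD('n option))"
proof (cases "slt a b")
  case False
  then have empty: "{\<omega>\<in>space M. has_chain a b n (Pts \<omega>)} = {}"
    using assms(4) by (auto simp: has_chain_def ocbox_empty)
  have "0 \<le> coord j (b - a)" for j using coord_mono[OF assms(2)] by simp
  then have "0 \<le> (\<Prod>j\<in>UNIV. coord j (b - a)) ^ n / fact n ^ CARD('n option)"
    by (intro divide_nonneg_nonneg zero_le_power prod_nonneg) auto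
  then show ?thesis unfolding empty by (rule outer_measure_le_empty)
next
  case True
  then show ?thesis
    using outer_measure_has_chain_le_prod[OF pp True assms(3,4)]
    by (simp add: prod_dividef prod_power_distrib)
qed

section \<open>The state space\<close>

lemma mem_cube_iff: "x \<in> cube q \<longleftrightarrow> (\<forall>i. -q \<le> x$i \<and> x$i \<le> q)"
  by (auto simp: cube_def ones_def less_eq_vec_def)

lemma finite_image_if_factors:
  assumes "finite (g ` A)" "\<And>x y. x \<in> A \<Longrightarrow> y \<in> A \<Longrightarrow> g x = g y \<Longrightarrow> f x = f y"
  shows "finite (f ` A)"
proof (rule finite_subset)
  show "f ` A \<subseteq> (\<lambda>s. f (inv_into A g s)) ` g ` A"
  proof
    fix z assume "z \<in> f ` A"
    then obtain x where x: "x \<in> A" "z = f x" by blast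
    have "inv_into A g (g x) \<in> A" "g (inv_into A g (g x)) = g x"
      using x(1) by (auto intro: inv_into_into f_inv_into_f)
    then have "z = f (inv_into A g (g x))"
      using assms(2)[OF x(1)] x(2) by simp
    then show "z \<in> (\<lambda>s. f (inv_into A g s)) ` g ` A" using x(1) by blast
  qed
  show "finite ((\<lambda>s. f (inv_into A g s)) ` g ` A)" using assms(1) by simp
qed

text \<open>On the cube, \<open>\<sigma>\<close> only depends on the position of each coordinate relative to the
  finitely many partition points of the slightly larger cube \<open>[-(q+1), q+1)\<^sup>d\<close>.\<close>

lemma finite_finvals:
  fixes \<sigma> :: "real^'n \<Rightarrow> ereal"
  assumes "\<sigma> \<in> StateSpace" "q > 0"
  shows "finite (finvals q \<sigma>)"
proof -
  have "\<forall>q>0. \<exists>S :: 'n \<Rightarrow> real set.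
        (\<forall>i. finite (S i) \<and> -q \<in> S i \<and> q \<in> S i \<and> S i \<subseteq> {-q..q}) \<and>
        (\<forall>x y. (\<forall>i. -q \<le> x$i \<and> x$i < q \<and> -q \<le> y$i \<and> y$i < q) \<longrightarrow>
               (\<forall>i. \<forall>s\<in>S i. s \<le> x$i \<longleftrightarrow> s \<le> y$i) \<longrightarrow> \<sigma> x = \<sigma> y)"
    using assms(1) unfolding StateSpace_def by blast
  then obtain S :: "'n \<Rightarrow> real set" where S: "\<forall>i. finite (S i)"
    and const: "\<forall>x y. (\<forall>i. -(q+1) \<le> x$i \<and> x$i < q+1 \<and> -(q+1) \<le> y$i \<and> y$i < q+1) \<longrightarrow>
               (\<forall>i. \<forall>s\<in>S i. s \<le> x$i \<longleftrightarrow> s \<le> y$i) \<longrightarrow> \<sigma> x = \<sigma> y"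
    using assms(2) by (metis add_pos_pos zero_less_one)
  define sig where "sig x = (\<lambda>i. {s\<in>S i. s \<le> x$i})" for x :: "real^'n"
  have "finite (sig ` cube q)"
  proof (rule finite_subset)
    show "sig ` cube q \<subseteq> (\<Pi>\<^sub>E i\<in>UNIV. Pow (S i))" by (auto simp: sig_def)
    show "finite (\<Pi>\<^sub>E i\<in>UNIV. Pow (S i))" using S by (intro finite_PiE) auto
  qed
  then have "finite (\<sigma> ` cube q)"
  proof (rule finite_image_if_factors)
    fix x y assume xy: "x \<in> cube q" "y \<in> cube q" and sig: "sig x = sig y"
    have "-(q+1) \<le> z$i \<and> z$i < q+1" if "z \<in> cube q" for z i
      using that[unfolded mem_cube_iff, rule_format, of i] by linarith
    then have "\<forall>i. -(q+1) \<le> x$i \<and> x$i < q+1 \<and> -(q+1) \<le> y$i \<and> y$i < q+1"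
      using xy by blast
    moreover have "\<forall>i. \<forall>s\<in>S i. s \<le> x$i \<longleftrightarrow> s \<le> y$i"
      using sig unfolding sig_def fun_eq_iff by blast
    ultimately show "\<sigma> x = \<sigma> y"
      using const[THEN spec[of _ x], THEN spec[of _ y]] by blast
  qed
  moreover have "finvals q \<sigma> = (\<lambda>n. ereal (of_int n)) -` (\<sigma> ` cube q)"
    by (auto simp: finvals_def) (metis imageI)
  ultimately show ?thesis by (auto intro: finite_vimageI simp: inj_on_def)
qed

lemma abs_le_linf: "\<bar>x$i\<bar> \<le> linf x"
  unfolding linf_def by (rule Max_ge) auto

lemma StateSpace_decay:
  fixes \<sigma> :: "real^'n \<Rightarrow> ereal" and b :: "real^'n"
  assumes "\<sigma> \<in> StateSpace"
  shows "\<exists>M\<ge>1. \<forall>y. y \<le> b \<and> M \<le> linf y \<longrightarrow>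
           \<sigma> y < ereal (- (linf y powr (real CARD('n) / (real CARD('n) + 1))))"
proof -
  define e where "e = real CARD('n) / (real CARD('n) + 1)"
  let ?f = "\<lambda>y. ereal (linf y powr (- real CARD('n) / (real CARD('n) + 1))) * \<sigma> y"
  have "((\<lambda>M. SUP y\<in>{y. y \<le> b \<and> linf y \<ge> M}. ?f y) \<longlongrightarrow> -\<infinity>) at_top"
    using assms unfolding StateSpace_def by blast
  then have "eventually (\<lambda>M. (SUP y\<in>{y. y \<le> b \<and> linf y \<ge> M}. ?f y) < ereal (-1)) at_top"
    unfolding tendsto_MInfty by blast
  then obtain M0 where M0: "\<And>M. M \<ge> M0 \<Longrightarrow> (SUP y\<in>{y. y \<le> b \<and> linf y \<ge> M}. ?f y) < ereal (-1)"
    unfolding eventually_at_top_linorder by blast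
  define M where "M = max M0 1"
  have "\<sigma> y < ereal (- (linf y powr e))" if y: "y \<le> b" "M \<le> linf y" for y
  proof -
    have "?f y \<le> (SUP y\<in>{y. y \<le> b \<and> linf y \<ge> M}. ?f y)"
      using y by (intro SUP_upper) auto
    also have "\<dots> < ereal (-1)" using M0[of M] by (simp add: M_def)
    finally have lt: "?f y < ereal (-1)" .
    have pos: "linf y powr e > 0" using y by (simp add: M_def)
    have inv: "linf y powr (- real CARD('n) / (real CARD('n) + 1)) = 1 / linf y powr e"
      unfolding e_def by (simp add: powr_minus_divide)
    show ?thesis
    proof (cases "\<sigma> y")
      case (real r)
      then have "r / linf y powr e < -1" using lt inv by simp
      then show ?thesis using real pos by (simp add: divide_less_eq)
    next
      case PInf
      then show ?thesis using lt inv pos by simp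
    qed simp
  qed
  then show ?thesis unfolding e_def by (intro exI[of _ M]) (simp add: M_def)
qed

lemma StateSpace_level_set_bounded:
  fixes \<sigma> :: "real^'n \<Rightarrow> ereal" and b :: "real^'n"
  assumes "\<sigma> \<in> StateSpace"
  shows "\<exists>R. (\<forall>i. \<bar>b$i\<bar> \<le> R) \<and> (\<forall>h x i. x \<le> b \<longrightarrow> ereal (of_int h) \<le> \<sigma> x \<longrightarrow>
           \<bar>x$i\<bar> \<le> R + \<bar>real_of_int h\<bar> powr ((real CARD('n) + 1) / real CARD('n)))"
proof -
  define e where "e = real CARD('n) / (real CARD('n) + 1)"
  define be where "be = (real CARD('n) + 1) / real CARD('n)"
  obtain M where M: "M \<ge> 1" "\<And>y. y \<le> b \<Longrightarrow> M \<le> linf y \<Longrightarrow> \<sigma> y < ereal (- (linf y powr e))"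
    using StateSpace_decay[OF assms, of b] unfolding e_def by blast
  define R where "R = max M (linf b)"
  have "\<bar>x$i\<bar> \<le> R + \<bar>real_of_int h\<bar> powr be" if x: "x \<le> b" "ereal (of_int h) \<le> \<sigma> x" for h x i
  proof (cases "linf x < M")
    case True
    then show ?thesis using abs_le_linf[of x i] by (simp add: R_def) (smt (verit) powr_ge_zero)
  next
    case False
    have "ereal (of_int h) < ereal (- (linf x powr e))"
      using x M(2)[OF x(1)] False by (meson linorder_not_less order_le_less_trans)
    then have "linf x powr e \<le> \<bar>real_of_int h\<bar>" by simp
    then have "(linf x powr e) powr be \<le> \<bar>real_of_int h\<bar> powr be"
      by (intro powr_mono2) (auto simp: be_def)
    moreover have "(linf x powr e) powr be = linf x"
      using False M(1) by (simp add: powr_powr e_def be_def)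
    moreover have "0 \<le> R" using M(1) by (simp add: R_def)
    ultimately show ?thesis using abs_le_linf[of x i] by simp
  qed
  moreover have "\<bar>b$i\<bar> \<le> R" for i using abs_le_linf[of b i] by (simp add: R_def)
  ultimately show ?thesis unfolding be_def by blast
qed

lemma ybh_bounds:
  fixes \<sigma> :: "real^'n \<Rightarrow> ereal"
  assumes lb: "\<And>x. x \<le> b \<Longrightarrow> ereal (of_int h) \<le> \<sigma> x \<Longrightarrow> \<forall>i. -R \<le> x$i"
    and bR: "\<forall>i. -R \<le> b$i"
  shows "ybh b h \<sigma> \<le> b"
    and "\<And>x. x \<le> b \<Longrightarrow> ereal (of_int h) \<le> \<sigma> x \<Longrightarrow> ybh b h \<sigma> \<le> x"
    and "\<forall>i. -R \<le> ybh b h \<sigma> $ i"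
proof -
  define S where "S = {x. x \<le> b \<and> ereal (of_int h) \<le> \<sigma> x}"
  have "ybh b h \<sigma> \<le> b \<and> (\<forall>x\<in>S. ybh b h \<sigma> \<le> x) \<and> (\<forall>i. -R \<le> ybh b h \<sigma> $ i)"
  proof (cases "S = {}")
    case True
    then have "ybh b h \<sigma> = b" unfolding ybh_def S_def Let_def by simp
    then show ?thesis using True bR by simp
  next
    case False
    text \<open>The greatest lower bound of the level set is its coordinatewise infimum.\<close>
    define w where "w = (\<chi> i. Inf ((\<lambda>x. x$i) ` S))"
    have bdd: "bdd_below ((\<lambda>x. x$i) ` S)" for i
      using lb unfolding S_def bdd_below_def by (intro exI[of _ "-R"]) auto
    have w_le: "w \<le> x" if "x \<in> S" for x
      unfolding less_eq_vec_def w_def using that bdd by (auto intro: cInf_lower)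
    have w_ge: "-R \<le> w $ i" for i
      unfolding w_def using False lb by (auto intro!: cInf_greatest simp: S_def)
    obtain x0 where "x0 \<in> S" using False by auto
    then have w_b: "w \<le> b" using w_le by (auto simp: S_def intro: order_trans)
    have "(GREATEST y. y \<le> b \<and> (\<forall>x\<in>S. y \<le> x \<and> x \<le> b)) = w"
    proof (rule Greatest_equality)
      show "w \<le> b \<and> (\<forall>x\<in>S. w \<le> x \<and> x \<le> b)" using w_b w_le by (auto simp: S_def)
    next
      fix y assume "y \<le> b \<and> (\<forall>x\<in>S. y \<le> x \<and> x \<le> b)"
      then show "y \<le> w" unfolding less_eq_vec_def w_def
        using False by (auto intro!: cInf_greatest simp: less_eq_vec_def)
    qed
    moreover have "ybh b h \<sigma> = (if S = {} then b else (GREATEST y. y \<le> b \<and> (\<forall>x\<in>S. y \<le> x \<and> x \<le> b)))"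
      unfolding ybh_def Let_def S_def by simp
    ultimately have "ybh b h \<sigma> = w" using False by simp
    then show ?thesis using w_b w_le w_ge by simp
  qed
  then show "ybh b h \<sigma> \<le> b" "\<And>x. x \<le> b \<Longrightarrow> ereal (of_int h) \<le> \<sigma> x \<Longrightarrow> ybh b h \<sigma> \<le> x"
    "\<forall>i. -R \<le> ybh b h \<sigma> $ i"
    by (simp_all add: S_def)
qed

lemma StateSpace_ybh:
  fixes \<sigma> :: "real^'n \<Rightarrow> ereal" and b :: "real^'n"
  assumes "\<sigma> \<in> StateSpace"
  shows "\<exists>R. \<forall>h. ybh b h \<sigma> \<le> b \<and> (\<forall>x. x \<le> b \<and> ereal (of_int h) \<le> \<sigma> x \<longrightarrow> ybh b h \<sigma> \<le> x) \<and>
     (\<forall>i. -(R + \<bar>real_of_int h\<bar> powr ((real CARD('n) + 1) / real CARD('n))) \<le> ybh b h \<sigma> $ i)"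
proof -
  obtain R where R: "\<And>i. \<bar>b$i\<bar> \<le> R" and level: "\<And>h x i. x \<le> b \<Longrightarrow> ereal (of_int h) \<le> \<sigma> x \<Longrightarrow>
      \<bar>x$i\<bar> \<le> R + \<bar>real_of_int h\<bar> powr ((real CARD('n) + 1) / real CARD('n))"
    using StateSpace_level_set_bounded[OF assms, of b] by blast
  have "ybh b h \<sigma> \<le> b \<and> (\<forall>x. x \<le> b \<and> ereal (of_int h) \<le> \<sigma> x \<longrightarrow> ybh b h \<sigma> \<le> x) \<and>
     (\<forall>i. -(R + \<bar>real_of_int h\<bar> powr ((real CARD('n) + 1) / real CARD('n))) \<le> ybh b h \<sigma> $ i)" for h
  proof -
    let ?R = "R + \<bar>real_of_int h\<bar> powr ((real CARD('n) + 1) / real CARD('n))"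
    have "\<forall>i. - ?R \<le> x$i" if "x \<le> b" "ereal (of_int h) \<le> \<sigma> x" for x
      using level[OF that] by (smt (verit))
    moreover have "\<forall>i. - ?R \<le> b$i" using R by (smt (verit) powr_ge_zero)
    ultimately show ?thesis using ybh_bounds[of b h \<sigma> ?R] by blast
  qed
  then show ?thesis by blast
qed

lemma add_abs_diff_powr_le:
  fixes c k n e :: real
  assumes "0 \<le> c" "0 \<le> e" "1 \<le> n"
  shows "c + \<bar>k - n\<bar> powr e \<le> (c + (1 + \<bar>k\<bar>) powr e) * n powr e"
proof -
  have "\<bar>k - n\<bar> \<le> (1 + \<bar>k\<bar>) * n"
    using assms(3) by (simp add: algebra_simps abs_if) (smt (verit) mult_le_cancel_left1)
  then have "\<bar>k - n\<bar> powr e \<le> ((1 + \<bar>k\<bar>) * n) powr e"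
    using assms(2) by (intro powr_mono2) auto
  then have "\<bar>k - n\<bar> powr e \<le> (1 + \<bar>k\<bar>) powr e * n powr e"
    by (simp only: powr_mult)
  moreover have "c \<le> c * n powr e"
    using assms ge_one_powr_ge_zero[of n e] by (simp add: mult_le_cancel_left1)
  ultimately show ?thesis by (simp add: algebra_simps)
qed

lemma StateSpace_ybh_gap:
  fixes \<sigma> :: "real^'n \<Rightarrow> ereal"
  assumes "\<sigma> \<in> StateSpace"
  shows "\<exists>R. 0 \<le> q + R \<and> (\<forall>h i. 0 \<le> (q *\<^sub>R ones - ybh (q *\<^sub>R ones) h \<sigma>) $ i \<and>
    (q *\<^sub>R ones - ybh (q *\<^sub>R ones) h \<sigma>) $ i
      \<le> q + R + \<bar>real_of_int h\<bar> powr ((real CARD('n) + 1) / real CARD('n)))"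
proof -
  obtain R where ybh_le: "\<And>h. ybh (q *\<^sub>R ones) h \<sigma> \<le> q *\<^sub>R ones"
    and ybh_ge: "\<And>h i. -(R + \<bar>real_of_int h\<bar> powr ((real CARD('n) + 1) / real CARD('n)))
      \<le> ybh (q *\<^sub>R ones) h \<sigma> $ i"
    using StateSpace_ybh[OF assms, of "q *\<^sub>R ones"] by blast
  have "0 \<le> q + R"
  proof -
    fix i :: 'n
    have "ybh (q *\<^sub>R ones) 0 \<sigma> $ i \<le> q" using ybh_le[of 0] by (simp add: less_eq_vec_def ones_def)
    moreover have "-R \<le> ybh (q *\<^sub>R ones) 0 \<sigma> $ i" using ybh_ge[of 0 i] by simp
    ultimately show ?thesis by linarith
  qed
  moreover have "0 \<le> (q *\<^sub>R ones - ybh (q *\<^sub>R ones) h \<sigma>) $ i" for h i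
    using ybh_le[of h] by (simp add: less_eq_vec_def)
  moreover have "(q *\<^sub>R ones - ybh (q *\<^sub>R ones) h \<sigma>) $ i
      \<le> q + R + \<bar>real_of_int h\<bar> powr ((real CARD('n) + 1) / real CARD('n))" for h i
    using ybh_ge[of h i] by (simp add: ones_def)
  ultimately show ?thesis by blast
qed

lemma vfact_nonneg: "(\<And>i. 0 \<le> x$i) \<Longrightarrow> 0 \<le> vfact x"
  unfolding vfact_def by (intro prod_nonneg) auto

lemma vfact_ybh_nonneg:
  fixes \<sigma> :: "real^'n \<Rightarrow> ereal"
  assumes "\<sigma> \<in> StateSpace"
  shows "0 \<le> vfact (q *\<^sub>R ones - ybh (q *\<^sub>R ones) h \<sigma>)"
proof -
  obtain R where "\<forall>h i. 0 \<le> (q *\<^sub>R ones - ybh (q *\<^sub>R ones) h \<sigma>) $ i \<and>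
      (q *\<^sub>R ones - ybh (q *\<^sub>R ones) h \<sigma>) $ i
        \<le> q + R + \<bar>real_of_int h\<bar> powr ((real CARD('n) + 1) / real CARD('n))"
    using StateSpace_ybh_gap[OF assms, of q] by blast
  then show ?thesis by (intro vfact_nonneg) blast
qed

text \<open>The level sets of \<open>\<sigma>\<close> grow at most like \<open>|h|\<^sup>(\<^sup>d\<^sup>+\<^sup>1\<^sup>)\<^sup>/\<^sup>d\<close>, so the volume
  \<open>(q\<one> - y\<^sup>h)!\<close> grows at most like \<open>(k - h)\<^sup>d\<^sup>+\<^sup>1\<close> and the supremum defining \<open>\<lambda>\<^sub>k\<close> is finite.\<close>

lemma bdd_above_lam_terms:
  fixes \<sigma> :: "real^'n \<Rightarrow> ereal"
  assumes "\<sigma> \<in> StateSpace"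
  shows "bdd_above ((\<lambda>h. vfact (q *\<^sub>R ones - ybh (q *\<^sub>R ones) h \<sigma>) *
           real_of_int (k - h) powr (- (real CARD('n) + 1))) ` {h. h \<le> k - 2})"
proof -
  define d where "d = real CARD('n)"
  define be where "be = (d + 1) / d"
  have be: "0 \<le> be" "be * d = d + 1" by (simp_all add: be_def d_def)
  obtain R where qR: "0 \<le> q + R" and gap: "\<And>h i. 0 \<le> (q *\<^sub>R ones - ybh (q *\<^sub>R ones) h \<sigma>) $ i \<and>
      (q *\<^sub>R ones - ybh (q *\<^sub>R ones) h \<sigma>) $ i \<le> q + R + \<bar>real_of_int h\<bar> powr be"
    using StateSpace_ybh_gap[OF assms, of q] unfolding be_def d_def by blast
  define C where "C = q + R + (1 + \<bar>real_of_int k\<bar>) powr be"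
  show ?thesis
  proof (rule bdd_aboveI2)
    fix h assume "h \<in> {h. h \<le> k - 2}"
    define n where "n = real_of_int (k - h)"
    have n: "2 \<le> n" using \<open>h \<in> {h. h \<le> k - 2}\<close> by (simp add: n_def)
    have "(q *\<^sub>R ones - ybh (q *\<^sub>R ones) h \<sigma>) $ i \<le> C * n powr be" for i
      using gap[of h i] add_abs_diff_powr_le[OF qR be(1), of n "real_of_int k"] n
      by (simp add: C_def n_def add.assoc)
    then have "vfact (q *\<^sub>R ones - ybh (q *\<^sub>R ones) h \<sigma>) \<le> (\<Prod>i\<in>(UNIV::'n set). C * n powr be)"
      unfolding vfact_def using gap by (intro prod_mono) auto
    also have "\<dots> = C ^ CARD('n) * n powr (d + 1)"
      using n be(2) unfolding d_def
      by (simp add: power_mult_distrib powr_realpow[symmetric] powr_powr)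
    finally have "vfact (q *\<^sub>R ones - ybh (q *\<^sub>R ones) h \<sigma>) * n powr (- (d + 1))
        \<le> C ^ CARD('n) * n powr (d + 1) * n powr (- (d + 1))"
      by (rule mult_right_mono) simp
    also have "\<dots> = C ^ CARD('n)"
      using n by (simp add: powr_add[symmetric])
    finally show "vfact (q *\<^sub>R ones - ybh (q *\<^sub>R ones) h \<sigma>) *
        real_of_int (k - h) powr (- (real CARD('n) + 1)) \<le> C ^ CARD('n)"
      by (simp add: n_def d_def)
  qed
qed

lemma lam_term_le_lam:
  fixes \<sigma> :: "real^'n \<Rightarrow> ereal"
  assumes "\<sigma> \<in> StateSpace" "h \<le> k - 2"
  shows "vfact (q *\<^sub>R ones - ybh (q *\<^sub>R ones) h \<sigma>) * real_of_int (k - h) powr (- (real CARD('n) + 1))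
    \<le> lam q k \<sigma>"
  unfolding lam_def using assms(2) by (intro cSUP_upper bdd_above_lam_terms[OF assms(1)]) simp

lemma lam_nonneg:
  fixes \<sigma> :: "real^'n \<Rightarrow> ereal"
  assumes "\<sigma> \<in> StateSpace"
  shows "0 \<le> lam q k \<sigma>"
proof -
  have "0 \<le> vfact (q *\<^sub>R ones - ybh (q *\<^sub>R ones) (k - 2) \<sigma>) *
      real_of_int (k - (k - 2)) powr (- (real CARD('n) + 1))"
    using vfact_ybh_nonneg[OF assms] by simp
  also have "\<dots> \<le> lam q k \<sigma>" by (rule lam_term_le_lam[OF assms]) simp
  finally show ?thesis .
qed

lemma power_div_fact_le_exp:
  fixes x :: real
  assumes "0 \<le> x"
  shows "x ^ n / fact n \<le> exp x"
proof -
  have sums: "(\<lambda>i. x ^ i / fact i) sums exp x"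
    using exp_converges[of x] by (simp add: divide_inverse mult.commute)
  have "(\<Sum>i\<in>{n}. x ^ i / fact i) \<le> (\<Sum>i. x ^ i / fact i)"
    by (rule sum_le_suminf[OF sums_summable[OF sums]]) (use assms in auto)
  then show ?thesis using sums_unique[OF sums] by simp
qed

text \<open>With \<open>n! \<ge> (n/e)\<^sup>n\<close>, the volume bound \<open>(V t)\<^sup>n / (n!)\<^sup>d\<^sup>+\<^sup>1\<close> for chains of length \<open>n\<close>
  becomes geometric in \<open>n\<close> once \<open>V n\<^sup>-\<^sup>(\<^sup>d\<^sup>+\<^sup>1\<^sup>)\<close> is bounded.\<close>

lemma power_div_fact_power_le:
  fixes V t l :: real and n d :: nat
  assumes V: "0 \<le> V" and t: "0 \<le> t" and n: "1 \<le> n"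
    and l: "V * real n powr (- (real d + 1)) \<le> l"
  shows "(V * t) ^ n / fact n ^ (d + 1) \<le> (l * exp (real d + 1) * t) ^ n"
proof -
  define E where "E = exp (1::real)"
  have E: "0 < E" by (simp add: E_def)
  have n0: "0 < real n" using n by simp
  have "real n ^ n / E ^ n \<le> fact n"
    using power_div_fact_le_exp[of "real n" n] exp_of_nat_mult[of n "1::real"]
    by (simp add: E_def divide_le_eq mult.commute)
  then have "(real n ^ n / E ^ n) ^ (d + 1) \<le> fact n ^ (d + 1)"
    by (rule power_mono) (use E in auto)
  also have "(real n ^ n / E ^ n) ^ (d + 1) = (real n ^ (d + 1) / E ^ (d + 1)) ^ n"
  proof -
    have "(real n ^ n / E ^ n) ^ (d + 1) = (real n / E) ^ (n * (d + 1))"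
      by (simp only: power_mult power_divide)
    also have "\<dots> = (real n / E) ^ ((d + 1) * n)" by (simp only: mult.commute)
    also have "\<dots> = (real n ^ (d + 1) / E ^ (d + 1)) ^ n" by (simp only: power_mult power_divide)
    finally show ?thesis .
  qed
  finally have fact_ge: "(real n ^ (d + 1) / E ^ (d + 1)) ^ n \<le> fact n ^ (d + 1)" .
  have "(V * t) ^ n / fact n ^ (d + 1) \<le> (V * t) ^ n / (real n ^ (d + 1) / E ^ (d + 1)) ^ n"
    using fact_ge n0 E V t by (intro divide_left_mono) auto
  also have "\<dots> = (V / real n ^ (d + 1) * E ^ (d + 1) * t) ^ n"
    by (simp add: power_divide[symmetric] field_simps)
  also have "\<dots> \<le> (l * E ^ (d + 1) * t) ^ n"
  proof -
    have "real n powr (real d + 1) = real n ^ (d + 1)"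
      using powr_realpow[OF n0, of "d + 1"] by (simp add: add.commute)
    then have "real n powr (- (real d + 1)) = 1 / real n ^ (d + 1)"
      by (simp only: powr_minus_divide)
    then have "V / real n ^ (d + 1) \<le> l" using l by simp
    then show ?thesis using V t E n0 by (intro power_mono mult_right_mono) auto
  qed
  also have "E ^ (d + 1) = exp (real d + 1)"
    unfolding E_def using exp_of_nat_mult[of "d + 1" "1::real"] by (simp add: add.commute)
  finally show ?thesis .
qed

lemma sums_power_add_two_le:
  fixes r :: real
  assumes "0 \<le> r" "r \<le> 1/2"
  shows "summable (\<lambda>j. r ^ (j + 2))" "(\<Sum>j. r ^ (j + 2)) \<le> 2 * r\<^sup>2"
proof -
  have "(\<lambda>j. r\<^sup>2 * r ^ j) sums (r\<^sup>2 * (1 / (1 - r)))"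
    using assms by (intro sums_mult geometric_sums) auto
  moreover have "(\<lambda>j. r ^ (j + 2)) = (\<lambda>j. r\<^sup>2 * r ^ j)"
    by (simp add: fun_eq_iff power_add power2_eq_square mult_ac)
  ultimately have sums: "(\<lambda>j. r ^ (j + 2)) sums (r\<^sup>2 / (1 - r))"
    by simp
  then show "summable (\<lambda>j. r ^ (j + 2))" by (rule sums_summable)
  have "r\<^sup>2 / (1 - r) \<le> r\<^sup>2 / (1/2)"
    using assms by (intro divide_left_mono) auto
  then show "(\<Sum>j. r ^ (j + 2)) \<le> 2 * r\<^sup>2" using sums_unique[OF sums] by simp
qed

lemma Hlp_ge_imp_chain:
  assumes "enat n \<le> Hlp P y x t" "0 < n"
  shows "\<exists>C. finite C \<and> C \<subseteq> P \<inter> {(\<eta>, s). vlt y \<eta> \<and> \<eta> \<le> x \<and> 0 < s \<and> s \<le> t} \<and> card C = n \<and>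
    pairwise (\<lambda>p p'. slt p p' \<or> slt p' p) C"
proof -
  have "enat (n - 1) < Hlp P y x t"
    using assms by (cases n) (auto simp: Suc_ile_eq)
  then obtain C where C: "finite C" "C \<subseteq> P \<inter> {(\<eta>, s). vlt y \<eta> \<and> \<eta> \<le> x \<and> 0 < s \<and> s \<le> t}"
    and chain: "\<forall>p\<in>C. \<forall>p'\<in>C. p \<noteq> p' \<longrightarrow> slt p p' \<or> slt p' p"
    and card: "enat (n - 1) < enat (card C)"
    unfolding Hlp_def less_Sup_iff by blast
  have "n \<le> card C" using card assms(2) by simp
  then obtain C' where C': "C' \<subseteq> C" "card C' = n" "finite C'"
    by (rule obtain_subset_with_card_n)
  moreover have "pairwise (\<lambda>p p'. slt p p' \<or> slt p' p) C'"
    using chain C'(1) unfolding pairwise_def by blast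
  ultimately show ?thesis using C(2) by (intro exI[of _ C']) auto
qed

lemma chain_region_subset_ocbox:
  assumes "y0 \<le> y" "x \<in> cube q"
  shows "P \<inter> {(\<eta>, s). vlt y \<eta> \<and> \<eta> \<le> x \<and> 0 < s \<and> s \<le> t} \<subseteq> ocbox (y0, 0) (q *\<^sub>R ones, t)"
proof
  fix p assume p: "p \<in> P \<inter> {(\<eta>, s). vlt y \<eta> \<and> \<eta> \<le> x \<and> 0 < s \<and> s \<le> t}"
  obtain \<eta> s where ps: "p = (\<eta>, s)" by (cases p)
  have "y0 $ i < \<eta> $ i \<and> \<eta> $ i \<le> q" for i
  proof -
    have "y0 $ i \<le> y $ i" using assms(1) by (simp add: less_eq_vec_def)
    moreover have "y $ i < \<eta> $ i" "\<eta> $ i \<le> x $ i"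
      using p ps by (auto simp: vlt_def less_eq_vec_def)
    moreover have "x $ i \<le> q" using assms(2) by (simp add: mem_cube_iff)
    ultimately show ?thesis by linarith
  qed
  then show "p \<in> ocbox (y0, 0) (q *\<^sub>R ones, t)"
    using p ps by (simp add: ocbox_def all_option_split coord_def ones_def)
qed

text \<open>An occurrence of \<open>G\<close> with \<open>\<sigma>(x) = k - 1\<close> and \<open>\<sigma>(y) = h\<close> forces a chain of \<open>k - h\<close>
  Poisson points in the box \<open>(y\<^sup>h, q\<one>] \<times> (0, t]\<close>, because \<open>y\<^sup>h \<le> y\<close>.\<close>

lemma eventG_imp_has_chain:
  fixes \<sigma> :: "real^'n \<Rightarrow> ereal"
  assumes "\<sigma> \<in> StateSpace" "q > 0" "eventG q \<sigma> t P"
  shows "\<exists>k\<in>{Min (finvals q \<sigma>) + 1..Max (finvals q \<sigma>) + 1}. \<exists>j::nat.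
    has_chain (ybh (q *\<^sub>R ones) (k - 2 - int j) \<sigma>, 0) (q *\<^sub>R ones, t) (j + 2) P"
proof -
  obtain x y a b where x: "x \<in> cube q" and yx: "vlt y x" and sy: "\<sigma> y = ereal (of_int a)"
    and sx: "\<sigma> x = ereal (of_int b)" and ab: "a \<le> b - 1"
    and H: "enat (nat (b + 1 - a)) \<le> Hlp P y x t"
    using assms(3) unfolding eventG_def by blast
  define j where "j = nat (b - 1 - a)"
  have a: "a = (b + 1) - 2 - int j" and n: "nat (b + 1 - a) = j + 2"
    using ab by (simp_all add: j_def)
  have "b \<in> finvals q \<sigma>" using x sx by (auto simp: finvals_def)
  then have k: "b + 1 \<in> {Min (finvals q \<sigma>) + 1..Max (finvals q \<sigma>) + 1}"
    using finite_finvals[OF assms(1,2)] by simp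
  obtain R where "\<forall>x. x \<le> q *\<^sub>R ones \<and> ereal (of_int a) \<le> \<sigma> x \<longrightarrow> ybh (q *\<^sub>R ones) a \<sigma> \<le> x"
    using StateSpace_ybh[OF assms(1), of "q *\<^sub>R ones"] by blast
  moreover have "y \<le> q *\<^sub>R ones"
  proof -
    have "y \<le> x" using yx by (auto simp: vlt_def less_eq_vec_def less_imp_le)
    also have "x \<le> q *\<^sub>R ones" using x by (simp add: mem_cube_iff less_eq_vec_def ones_def)
    finally show ?thesis .
  qed
  ultimately have "ybh (q *\<^sub>R ones) a \<sigma> \<le> y" using sy by simp
  then have "has_chain (ybh (q *\<^sub>R ones) a \<sigma>, 0) (q *\<^sub>R ones, t) (j + 2) P"
    using Hlp_ge_imp_chain[of "j + 2" P y x t] H n chain_region_subset_ocbox[OF _ x, of _ y P t]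
    unfolding has_chain_def by fastforce
  then show ?thesis using k a by blast
qed

lemma outer_measure_level_chain_le:
  fixes Pts :: "'w \<Rightarrow> ((real^'n) \<times> real) set" and \<sigma> :: "real^'n \<Rightarrow> ereal"
  assumes pp: "poisson_pp M Pts" and \<sigma>: "\<sigma> \<in> StateSpace" and t: "0 \<le> t"
  shows "outer_measure_le M
    {\<omega>\<in>space M. has_chain (ybh (q *\<^sub>R ones) (k - 2 - int j) \<sigma>, 0) (q *\<^sub>R ones, t) (j + 2) (Pts \<omega>)}
    ((lam q k \<sigma> * exp (real CARD('n) + 1) * t) ^ (j + 2))"
proof -
  let ?y = "ybh (q *\<^sub>R ones) (k - 2 - int j) \<sigma>"
  let ?V = "vfact (q *\<^sub>R ones - ?y)"
  obtain R where "\<forall>h. ybh (q *\<^sub>R ones) h \<sigma> \<le> q *\<^sub>R ones"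
    using StateSpace_ybh[OF \<sigma>, of "q *\<^sub>R ones"] by blast
  then have le: "(?y, 0) \<le> (q *\<^sub>R ones, t)" using t by (simp add: less_eq_prod_def)
  have "?V * real (j + 2) powr (- (real CARD('n) + 1)) \<le> lam q k \<sigma>"
    using lam_term_le_lam[OF \<sigma>, of "k - 2 - int j" k q] by simp
  then have "(?V * t) ^ (j + 2) / fact (j + 2) ^ (CARD('n) + 1)
      \<le> (lam q k \<sigma> * exp (real CARD('n) + 1) * t) ^ (j + 2)"
    using vfact_ybh_nonneg[OF \<sigma>] t by (intro power_div_fact_power_le) auto
  moreover have "(\<Prod>i\<in>UNIV. coord i ((q *\<^sub>R ones, t) - (?y, 0))) = ?V * t"
    by (simp add: prod_coord)
  ultimately show ?thesis
    using outer_measure_has_chain_le[OF pp le, of "j + 2"]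
    by (auto elim: outer_measure_le_mono)
qed

definition level_event ::
    "'w measure \<Rightarrow> ('w \<Rightarrow> ((real^'n) \<times> real) set) \<Rightarrow> (real^'n \<Rightarrow> ereal) \<Rightarrow> real \<Rightarrow> real \<Rightarrow>
      int \<Rightarrow> 'w set" where
  "level_event M Pts \<sigma> q t k = {\<omega>\<in>space M. \<exists>j::nat.
     has_chain (ybh (q *\<^sub>R ones) (k - 2 - int j) \<sigma>, 0) (q *\<^sub>R ones, t) (j + 2) (Pts \<omega>)}"

lemma eventG_subset_level_events:
  fixes \<sigma> :: "real^'n \<Rightarrow> ereal"
  assumes "\<sigma> \<in> StateSpace" "q > 0"
  shows "{\<omega>\<in>space M. eventG q \<sigma> t (Pts \<omega>)}
    \<subseteq> (\<Union>k\<in>{Min (finvals q \<sigma>) + 1..Max (finvals q \<sigma>) + 1}. level_event M Pts \<sigma> q t k)"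
proof
  fix \<omega> assume "\<omega> \<in> {\<omega>\<in>space M. eventG q \<sigma> t (Pts \<omega>)}"
  then obtain k j where "k \<in> {Min (finvals q \<sigma>) + 1..Max (finvals q \<sigma>) + 1}" "\<omega> \<in> space M"
    "has_chain (ybh (q *\<^sub>R ones) (k - 2 - int j) \<sigma>, 0) (q *\<^sub>R ones, t) (j + 2) (Pts \<omega>)"
    using eventG_imp_has_chain[OF assms] by blast
  then show "\<omega> \<in> (\<Union>k\<in>{Min (finvals q \<sigma>) + 1..Max (finvals q \<sigma>) + 1}. level_event M Pts \<sigma> q t k)"
    by (auto simp: level_event_def)
qed

lemma outer_measure_level_event_le:
  fixes Pts :: "'w \<Rightarrow> ((real^'n) \<times> real) set" and \<sigma> :: "real^'n \<Rightarrow> ereal"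
  assumes pp: "poisson_pp M Pts" and \<sigma>: "\<sigma> \<in> StateSpace" and t: "0 \<le> t"
    and small: "lam q k \<sigma> * exp (real CARD('n) + 1) * t \<le> 1/2"
  shows "outer_measure_le M (level_event M Pts \<sigma> q t k) (2 * (lam q k \<sigma> * exp (real CARD('n) + 1) * t)\<^sup>2)"
proof -
  interpret prob_space M by (rule poisson_ppD(1)[OF pp])
  let ?r = "lam q k \<sigma> * exp (real CARD('n) + 1) * t"
  have r: "0 \<le> ?r" using lam_nonneg[OF \<sigma>] t by simp
  have "outer_measure_le M (\<Union>j. {\<omega>\<in>space M.
      has_chain (ybh (q *\<^sub>R ones) (k - 2 - int j) \<sigma>, 0) (q *\<^sub>R ones, t) (j + 2) (Pts \<omega>)})
      (\<Sum>j. ?r ^ (j + 2))"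
    using sums_power_add_two_le(1)[OF r small]
    by (intro outer_measure_le_UN_nat outer_measure_level_chain_le[OF pp \<sigma> t])
  moreover have "level_event M Pts \<sigma> q t k \<subseteq> (\<Union>j. {\<omega>\<in>space M.
      has_chain (ybh (q *\<^sub>R ones) (k - 2 - int j) \<sigma>, 0) (q *\<^sub>R ones, t) (j + 2) (Pts \<omega>)})"
    by (auto simp: level_event_def)
  ultimately show ?thesis
    using sums_power_add_two_le(2)[OF r small] by (rule outer_measure_le_mono)
qed

lemma psiK_square:
  assumes "finvals q \<sigma> \<noteq> {}"
  shows "(psiK q \<sigma>)\<^sup>2 = (\<Sum>k\<in>{Min (finvals q \<sigma>) + 1..Max (finvals q \<sigma>) + 1}. (lam q k \<sigma>)\<^sup>2)"
  using assms by (simp add: psiK_def sum_nonneg)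

lemma level_rate_le_half:
  assumes "finvals q \<sigma> \<noteq> {}" "k \<in> {Min (finvals q \<sigma>) + 1..Max (finvals q \<sigma>) + 1}" "0 \<le> t"
    and "2 * exp (real CARD('n) + 1) * psiK q \<sigma> * t < 1"
  shows "lam q k \<sigma> * exp (real CARD('n) + 1) * t \<le> 1/2"
proof -
  have "(lam q k \<sigma>)\<^sup>2 \<le> (psiK q \<sigma>)\<^sup>2"
    unfolding psiK_square[OF assms(1)] using assms(2) by (intro member_le_sum) auto
  moreover have "0 \<le> psiK q \<sigma>" by (simp add: psiK_def sum_nonneg)
  ultimately have "lam q k \<sigma> \<le> psiK q \<sigma>" by (rule power2_le_imp_le)
  then have "lam q k \<sigma> * exp (real CARD('n) + 1) * t \<le> psiK q \<sigma> * exp (real CARD('n) + 1) * t"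
    using assms(3) by (intro mult_right_mono) auto
  also have "\<dots> \<le> 1/2" using assms(4) by (simp add: mult_ac)
  finally show ?thesis .
qed

lemma sum_level_bounds_eq:
  assumes "finvals q \<sigma> \<noteq> {}"
  shows "(\<Sum>k\<in>{Min (finvals q \<sigma>) + 1..Max (finvals q \<sigma>) + 1}.
      2 * (lam q k \<sigma> * exp (real CARD('n) + 1) * t)\<^sup>2)
    = 2 * exp (2 * (real CARD('n) + 1)) * (psiK q \<sigma>)\<^sup>2 * t\<^sup>2"
proof -
  have "(exp (real CARD('n) + 1))\<^sup>2 = exp (2 * (real CARD('n) + 1))"
    by (rule exp_double[symmetric])
  then show ?thesis
    by (simp add: psiK_square[OF assms] sum_distrib_left power_mult_distrib mult_ac)
qed

theorem lemma7p3:
  fixes M :: "'w measure" and Pts :: "'w \<Rightarrow> ((real^'n) \<times> real) set"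
    and \<sigma> :: "real^'n \<Rightarrow> ereal" and q t :: real
  assumes "CARD('n) \<ge> 2"
    and "poisson_pp M Pts"
    and "\<sigma> \<in> StateSpace"
    and "q > 0"
    and "0 < t"
    and "2 * exp (real CARD('n) + 1) * psiK q \<sigma> * t < 1"
  shows "\<exists>E\<in>sets M. {\<omega>\<in>space M. eventG q \<sigma> t (Pts \<omega>)} \<subseteq> E \<and>
           measure M E \<le> 2 * exp (2 * (real CARD('n) + 1)) * (psiK q \<sigma>)\<^sup>2 * t\<^sup>2"
proof -
  let ?K = "{Min (finvals q \<sigma>) + 1..Max (finvals q \<sigma>) + 1}"
  have "outer_measure_le M {\<omega>\<in>space M. eventG q \<sigma> t (Pts \<omega>)}
      (2 * exp (2 * (real CARD('n) + 1)) * (psiK q \<sigma>)\<^sup>2 * t\<^sup>2)"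
  proof (cases "finvals q \<sigma> = {}")
    case True
    then have empty: "{\<omega>\<in>space M. eventG q \<sigma> t (Pts \<omega>)} = {}"
      by (auto simp: eventG_def finvals_def)
    show ?thesis unfolding empty by (rule outer_measure_le_empty) simp
  next
    case False
    have "outer_measure_le M (\<Union>k\<in>?K. level_event M Pts \<sigma> q t k)
        (\<Sum>k\<in>?K. 2 * (lam q k \<sigma> * exp (real CARD('n) + 1) * t)\<^sup>2)"
      using level_rate_le_half[OF False _ _ assms(6)] assms(5)
      by (intro outer_measure_le_UN outer_measure_level_event_le[OF assms(2,3)]) auto
    then show ?thesis
      by (rule outer_measure_le_mono[OF _ eventG_subset_level_events[OF assms(3,4)]])
        (simp add: sum_level_bounds_eq[OF False])
  qed
  then show ?thesis unfolding outer_measure_le_def .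
qed

end
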